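(* Let $X$ be a pure $d$-dimensional weighted simplicial complex with $d\ge2$, whose 1-skeleton is connected and such that for every vertex $v\in X(0)$ the 1-skeleton of the link $X_v$ is connected. Let $\lambda\in(0,1]$ and suppose that for every vertex $v\in X(0)$, every nonzero eigenvalue of the Laplacian $L_v=I-A_v$ of the 1-skeleton of $X_v$ is at least $\lambda$. Then every nonzero eigenvalue of the Laplacian $L=I-A$ of the 1-skeleton of $X$ is at least $2-\frac1\lambda$.
   Context: A pure $d$-dimensional simplicial complex $X$ is a finite family of finite sets closed under taking subsets, all of whose maximal members have $d+1$ elements; $X(i)$ denotes the set of faces with $i+1$ elements. A weighted complex is equipped with a probability distribution $\Pi$ on $X(d)$; the weight of $\tau\in X(i)$ is $w(\tau)=\binom{d+1}{i+1}^{-1}\sum_{\sigma\in X(d),\,\sigma\supseteq\tau}\Pi(\sigma)$. The link of $\tau$ is $X_\tau=\{\sigma\setminus\tau:\ \tau\subseteq\sigma\in X\}$, weighted by the distribution $\Pi_\tau(\eta)=\Pi(\eta\cup\tau)/\sum_{\sigma\in X(d),\sigma\supseteq\tau}\Pi(\sigma)$ on its top faces, with induced weights $w_\tau$ defined by the same formula. For a weighted complex $Y$ of dimension $\ge1$, its normalized adjacency operator $A$ acts on $f:Y(0)\to\mathbb R$ by $(Af)(v)=\sum_{u:\{u,v\}\in Y(1)}\frac{w(\{v,u\})}{2w(v)}f(u)$; it is self-adjoint with respect to $\langle f,g\rangle=\sum_v w(v)f(v)g(v)$. The Laplacian is $I-A$; its eigenvalues are real and lie in $[0,2]$, and $0$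 is an eigenvalue with the constant functions as eigenvectors. $A_v$ denotes the adjacency operator of the 1-skeleton of $X_v$ with the link weights $w_v$. *)

theory Defs
  imports Complex_Main
begin

definition pure_complex :: "'a set set \<Rightarrow> nat \<Rightarrow> bool" where
  "pure_complex X d \<longleftrightarrow> finite X \<and> (\<forall>\<sigma>\<in>X. finite \<sigma>) \<and>
     (\<forall>\<sigma>\<in>X. \<forall>\<tau>. \<tau> \<subseteq> \<sigma> \<longrightarrow> \<tau> \<in> X) \<and>
     (\<forall>\<sigma>\<in>X. (\<forall>\<tau>\<in>X. \<sigma> \<subseteq> \<tau> \<longrightarrow> \<tau> = \<sigma>) \<longrightarrow> card \<sigma> = d + 1)"

definition faces :: "'a set set \<Rightarrow> nat \<Rightarrow> 'a set set" where
  "faces X i = {\<sigma>\<in>X. card \<sigma> = i + 1}"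

definition vertices :: "'a set set \<Rightarrow> 'a set" where
  "vertices X = {v. {v} \<in> X}"

definition prob_dist :: "'a set set \<Rightarrow> nat \<Rightarrow> ('a set \<Rightarrow> real) \<Rightarrow> bool" where
  "prob_dist X d \<Pi> \<longleftrightarrow> (\<forall>\<sigma>\<in>faces X d. \<Pi> \<sigma> > 0) \<and> (\<Sum>\<sigma>\<in>faces X d. \<Pi> \<sigma>) = 1"

definition weight :: "'a set set \<Rightarrow> nat \<Rightarrow> ('a set \<Rightarrow> real) \<Rightarrow> 'a set \<Rightarrow> real" where
  "weight X d \<Pi> \<tau> = (\<Sum>\<sigma>\<in>{\<sigma>\<in>faces X d. \<tau> \<subseteq> \<sigma>}. \<Pi> \<sigma>) / real ((d + 1) choose (card \<tau>))"

definition link :: "'a set set \<Rightarrow> 'a set \<Rightarrow> 'a set set" where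
  "link X \<tau> = {\<sigma> - \<tau> | \<sigma>. \<sigma> \<in> X \<and> \<tau> \<subseteq> \<sigma>}"

definition link_dist :: "'a set set \<Rightarrow> nat \<Rightarrow> ('a set \<Rightarrow> real) \<Rightarrow> 'a set \<Rightarrow> 'a set \<Rightarrow> real" where
  "link_dist X d \<Pi> \<tau> \<eta> = \<Pi> (\<eta> \<union> \<tau>) / (\<Sum>\<sigma>\<in>{\<sigma>\<in>faces X d. \<tau> \<subseteq> \<sigma>}. \<Pi> \<sigma>)"

definition adjacency :: "'a set set \<Rightarrow> nat \<Rightarrow> ('a set \<Rightarrow> real) \<Rightarrow> ('a \<Rightarrow> real) \<Rightarrow> 'a \<Rightarrow> real" where
  "adjacency Y k \<Pi> f v =
     (\<Sum>u\<in>{u. {u, v} \<in> faces Y 1}. weight Y k \<Pi> {v, u} / (2 * weight Y k \<Pi> {v}) * f u)"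

definition laplacian :: "'a set set \<Rightarrow> nat \<Rightarrow> ('a set \<Rightarrow> real) \<Rightarrow> ('a \<Rightarrow> real) \<Rightarrow> 'a \<Rightarrow> real" where
  "laplacian Y k \<Pi> f v = f v - adjacency Y k \<Pi> f v"

definition laplacian_eigenvalue :: "'a set set \<Rightarrow> nat \<Rightarrow> ('a set \<Rightarrow> real) \<Rightarrow> real \<Rightarrow> bool" where
  "laplacian_eigenvalue Y k \<Pi> \<mu> \<longleftrightarrow>
     (\<exists>f. (\<exists>v\<in>vertices Y. f v \<noteq> 0) \<and> (\<forall>v\<in>vertices Y. laplacian Y k \<Pi> f v = \<mu> * f v))"

definition skeleton_connected :: "'a set set \<Rightarrow> bool" where
  "skeleton_connected Y \<longleftrightarrow>
     (\<forall>u\<in>vertices Y. \<forall>v\<in>vertices Y. (\<lambda>a b. {a, b} \<in> faces Y 1)\<^sup>*\<^sup>* u v)"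

end

theory Submission
  imports Defs "HOL-Analysis.Function_Topology" "HOL-Analysis.Convex"
begin

text \<open>Garland's method. For a function \<open>g\<close> on the vertices and a vertex \<open>v\<close>, restrict \<open>g\<close>
  to the link of \<open>v\<close>. Averaged over \<open>v\<close>, the quadratic forms of the link adjacency operators
  give the quadratic form \<open>\<langle>Ag, g\<rangle>\<close>, the link norms give \<open>\<parallel>g\<parallel>\<^sup>2\<close>, and the link mean of \<open>g\<close>
  at \<open>v\<close> is \<open>(Ag)(v)\<close>. The spectral gap of a connected link bounds its quadratic form by
  \<open>\<lambda> \<cdot> mean\<^sup>2 + (1 - \<lambda>) \<cdot> norm\<close>: a maximiser of the form on the unit sphere orthogonal to the
  constants is an eigenfunction, and connectivity rules out the eigenvalue \<open>0\<close> there.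
  For an eigenfunction \<open>Af = \<alpha> f\<close> the averaged bounds give \<open>\<alpha> \<le> \<lambda> \<alpha>\<^sup>2 + 1 - \<lambda>\<close>, that is
  \<open>(1 - \<alpha>) (1 - \<lambda> - \<lambda> \<alpha>) \<le> 0\<close>; a nonzero Laplacian eigenvalue \<open>\<mu> = 1 - \<alpha>\<close> has \<open>\<alpha> < 1\<close>,
  so \<open>\<lambda> (2 - \<mu>) \<le> 1\<close>.\<close>

section \<open>Spectral bound for a finite weighted graph\<close>

lemma compact_PiE_UNIV:
  fixes F :: "'i \<Rightarrow> real set"
  assumes "\<And>i. compact (F i)"
  shows "compact (Pi\<^sub>E UNIV F)"
proof -
  have "compactin (product_topology (\<lambda>i. euclidean) UNIV) (Pi\<^sub>E UNIV F)"
    using assms by (simp add: compactin_PiE)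
  then show ?thesis by (simp add: euclidean_product_topology)
qed

lemma linear_coeff_eq_0_if_quadratic_nonpos:
  fixes b c :: real
  assumes nonpos: "\<And>t. b * t + c * t\<^sup>2 \<le> 0"
  shows "b = 0"
proof (rule ccontr)
  assume "b \<noteq> 0"
  define D where "D = \<bar>c\<bar> + 1"
  have "0 < D" unfolding D_def by simp
  have "(b * (b / D) + c * (b / D)\<^sup>2) * D\<^sup>2 \<le> 0"
    using nonpos[of "b / D"] by (simp add: mult_nonpos_nonneg)
  moreover have "(b * (b / D) + c * (b / D)\<^sup>2) * D\<^sup>2 = b\<^sup>2 * D + c * b\<^sup>2"
    using \<open>0 < D\<close> by (simp add: field_simps power2_eq_square)
  then have "(b * (b / D) + c * (b / D)\<^sup>2) * D\<^sup>2 = b\<^sup>2 * (\<bar>c\<bar> + 1 + c)"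
    unfolding D_def by (simp add: algebra_simps)
  moreover have "0 < b\<^sup>2 * (\<bar>c\<bar> + 1 + c)"
    using \<open>b \<noteq> 0\<close> by (intro mult_pos_pos) auto
  ultimately show False by linarith
qed

locale weighted_graph =
  fixes S :: "'a set" and a :: "'a \<Rightarrow> real" and K :: "'a \<Rightarrow> 'a \<Rightarrow> real"
  assumes finite_S: "finite S"
    and weight_pos: "u \<in> S \<Longrightarrow> 0 < a u"
    and weight_sum: "(\<Sum>u\<in>S. a u) = 1"
    and kernel_sym: "u \<in> S \<Longrightarrow> x \<in> S \<Longrightarrow> K u x = K x u"
    and kernel_nonneg: "u \<in> S \<Longrightarrow> x \<in> S \<Longrightarrow> 0 \<le> K u x"
    and kernel_row_sum: "u \<in> S \<Longrightarrow> (\<Sum>x\<in>S. K u x) = a u"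
begin

definition wprod :: "('a \<Rightarrow> real) \<Rightarrow> ('a \<Rightarrow> real) \<Rightarrow> real" where
  "wprod g h = (\<Sum>u\<in>S. a u * g u * h u)"

definition bform :: "('a \<Rightarrow> real) \<Rightarrow> ('a \<Rightarrow> real) \<Rightarrow> real" where
  "bform g h = (\<Sum>u\<in>S. \<Sum>x\<in>S. K u x * g u * h x)"

definition walk :: "('a \<Rightarrow> real) \<Rightarrow> 'a \<Rightarrow> real" where
  "walk g u = (\<Sum>x\<in>S. K u x * g x) / a u"

definition edge :: "'a \<Rightarrow> 'a \<Rightarrow> bool" where
  "edge p q \<longleftrightarrow> p \<in> S \<and> q \<in> S \<and> 0 < K p q"

definition unit_perp :: "('a \<Rightarrow> real) set" where
  "unit_perp = {h. (\<forall>u. u \<notin> S \<longrightarrow> h u = 0) \<and> wprod h h = 1 \<and> wprod h (\<lambda>_. 1) = 0}"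

lemma wprod_comm: "wprod g h = wprod h g"
  by (simp add: wprod_def mult_ac)

lemma wprod_add_scaled: "wprod (\<lambda>u. g u + t * h u) k = wprod g k + t * wprod h k"
  by (simp add: wprod_def algebra_simps sum.distrib sum_distrib_left)

lemma wprod_square_add_scaled:
  "wprod (\<lambda>u. g u + t * h u) (\<lambda>u. g u + t * h u) = wprod g g + 2 * t * wprod g h + t\<^sup>2 * wprod h h"
  by (simp add: wprod_add_scaled wprod_comm[of _ "\<lambda>u. g u + t * h u"] wprod_comm[of h g]
      algebra_simps power2_eq_square)

lemma bform_comm: "bform g h = bform h g"
proof -
  have "bform g h = (\<Sum>x\<in>S. \<Sum>u\<in>S. K u x * g u * h x)"
    unfolding bform_def by (rule sum.swap)
  also have "\<dots> = bform h g"
    unfolding bform_def by (intro sum.cong refl) (simp add: kernel_sym mult_ac)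
  finally show ?thesis .
qed

lemma bform_add_scaled: "bform (\<lambda>u. g u + t * h u) k = bform g k + t * bform h k"
  by (simp add: bform_def algebra_simps sum.distrib sum_distrib_left)

lemma bform_square_add_scaled:
  "bform (\<lambda>u. g u + t * h u) (\<lambda>u. g u + t * h u) = bform g g + 2 * t * bform g h + t\<^sup>2 * bform h h"
  by (simp add: bform_add_scaled bform_comm[of _ "\<lambda>u. g u + t * h u"] bform_comm[of h g]
      algebra_simps power2_eq_square)

lemma wprod_one_one: "wprod (\<lambda>_. 1) (\<lambda>_. 1) = 1"
  by (simp add: wprod_def weight_sum)

lemma bform_one: "bform g (\<lambda>_. 1) = wprod g (\<lambda>_. 1)"
  unfolding bform_def wprod_def
  by (intro sum.cong refl) (simp add: kernel_row_sum flip: sum_distrib_right)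

lemma wprod_self_nonneg: "0 \<le> wprod g g"
  unfolding wprod_def by (intro sum_nonneg) (simp add: weight_pos less_imp_le mult.assoc)

lemma wprod_self_eq_0D:
  assumes "wprod g g = 0" and "u \<in> S"
  shows "g u = 0"
proof -
  have "\<forall>x\<in>S. a x * g x * g x = 0"
    using assms(1) finite_S weight_pos
    by (subst sum_nonneg_eq_0_iff[symmetric]) (auto simp: wprod_def less_imp_le mult.assoc)
  then show ?thesis using assms(2) weight_pos[of u] by auto
qed

lemma dirichlet_energy:
  "(\<Sum>u\<in>S. \<Sum>x\<in>S. K u x * (g u - g x)\<^sup>2) = 2 * wprod g g - 2 * bform g g"
proof -
  have left: "(\<Sum>u\<in>S. \<Sum>x\<in>S. K u x * (g u)\<^sup>2) = wprod g g"
    unfolding wprod_def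
    by (intro sum.cong refl) (simp add: kernel_row_sum power2_eq_square mult.assoc flip: sum_distrib_right)
  have "(\<Sum>u\<in>S. \<Sum>x\<in>S. K u x * (g x)\<^sup>2) = (\<Sum>x\<in>S. \<Sum>u\<in>S. K x u * (g x)\<^sup>2)"
    by (subst sum.swap) (intro sum.cong refl, simp add: kernel_sym)
  then have right: "(\<Sum>u\<in>S. \<Sum>x\<in>S. K u x * (g x)\<^sup>2) = wprod g g"
    using left by simp
  have "(\<Sum>u\<in>S. \<Sum>x\<in>S. K u x * (g u - g x)\<^sup>2) =
      (\<Sum>u\<in>S. \<Sum>x\<in>S. K u x * (g u)\<^sup>2 + K u x * (g x)\<^sup>2 - 2 * (K u x * g u * g x))"
    by (intro sum.cong refl) (simp add: power2_diff algebra_simps)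
  also have "\<dots> = 2 * wprod g g - 2 * bform g g"
    using left right unfolding bform_def by (simp add: sum.distrib sum_subtractf sum_distrib_left)
  finally show ?thesis .
qed

lemma constant_if_bform_eq_wprod:
  assumes conn: "\<And>u x. u \<in> S \<Longrightarrow> x \<in> S \<Longrightarrow> edge\<^sup>*\<^sup>* u x"
    and eq: "bform g g = wprod g g" and "u \<in> S" "x \<in> S"
  shows "g u = g x"
proof -
  have term_nonneg: "0 \<le> K p q * (g p - g q)\<^sup>2" if "p \<in> S" "q \<in> S" for p q
    using that kernel_nonneg by simp
  have "(\<Sum>p\<in>S. \<Sum>q\<in>S. K p q * (g p - g q)\<^sup>2) = 0"
    using eq by (simp add: dirichlet_energy)
  then have "\<forall>p\<in>S. (\<Sum>q\<in>S. K p q * (g p - g q)\<^sup>2) = 0"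
    using finite_S term_nonneg by (subst sum_nonneg_eq_0_iff[symmetric]) (auto intro: sum_nonneg)
  then have "K p q * (g p - g q)\<^sup>2 = 0" if "p \<in> S" "q \<in> S" for p q
    using that finite_S term_nonneg sum_nonneg_eq_0_iff[of S "\<lambda>q. K p q * (g p - g q)\<^sup>2"] by auto
  then have edge_eq: "g p = g q" if "edge p q" for p q
    using that unfolding edge_def by fastforce
  show ?thesis
    using conn[OF assms(3,4)] by (induction rule: rtranclp_induct) (auto dest: edge_eq)
qed

lemma bform_le_if_unit_perp_bound:
  assumes bound: "\<And>h. h \<in> unit_perp \<Longrightarrow> bform h h \<le> r"
    and perp: "wprod g (\<lambda>_. 1) = 0"
  shows "bform g g \<le> r * wprod g g"
proof (cases "wprod g g = 0")
  case True
  then show ?thesis by (simp add: bform_def wprod_self_eq_0D)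
next
  case False
  define c where "c = sqrt (wprod g g)"
  have c2: "c\<^sup>2 = wprod g g" and "0 < c"
    using False wprod_self_nonneg[of g] by (auto simp: c_def)
  define h where "h = (\<lambda>u. if u \<in> S then g u / c else 0)"
  have "wprod h h = wprod g g / c\<^sup>2" "wprod h (\<lambda>_. 1) = wprod g (\<lambda>_. 1) / c"
    "bform h h = bform g g / c\<^sup>2"
    unfolding wprod_def bform_def h_def
    by (simp_all add: sum_divide_distrib power2_eq_square)
  then have "h \<in> unit_perp" and "bform h h = bform g g / wprod g g"
    using False perp c2 by (auto simp: unit_perp_def h_def)
  then have "bform g g / wprod g g \<le> r" using bound by metis
  then show ?thesis
    using False wprod_self_nonneg[of g] by (simp add: divide_le_eq mult.commute)
qed

lemma unit_perp_bounded:
  assumes "h \<in> unit_perp" and "u \<in> S"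
  shows "\<bar>h u\<bar> \<le> sqrt (1 / a u)"
proof -
  have "a u * h u * h u \<le> (\<Sum>x\<in>S. a x * h x * h x)"
    using assms(2) finite_S weight_pos by (intro member_le_sum) (auto simp: less_imp_le mult.assoc)
  then have "(h u)\<^sup>2 \<le> 1 / a u"
    using assms weight_pos[of u] by (simp add: unit_perp_def wprod_def field_simps power2_eq_square)
  then show ?thesis
    using real_sqrt_le_mono real_sqrt_abs by metis
qed

lemma compact_unit_perp: "compact unit_perp"
proof -
  define B where
    "B = Pi\<^sub>E UNIV (\<lambda>u. if u \<in> S then {- sqrt (1 / a u) .. sqrt (1 / a u)} else {0})"
  have "unit_perp \<subseteq> B"
  proof
    fix h assume h: "h \<in> unit_perp"
    have "h u \<in> (if u \<in> S then {- sqrt (1 / a u) .. sqrt (1 / a u)} else {0})" for u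
    proof (cases "u \<in> S")
      case True
      then show ?thesis using unit_perp_bounded[OF h True] by (simp add: abs_le_iff)
    next
      case False
      then show ?thesis using h by (simp add: unit_perp_def)
    qed
    then show "h \<in> B" by (simp add: B_def PiE_iff)
  qed
  moreover have "B \<inter> {h. wprod h h = 1} \<inter> {h. wprod h (\<lambda>_. 1) = 0} \<subseteq> unit_perp"
    by (auto simp: unit_perp_def B_def PiE_iff split: if_splits)
  moreover have "unit_perp \<subseteq> {h. wprod h h = 1} \<inter> {h. wprod h (\<lambda>_. 1) = 0}"
    by (auto simp: unit_perp_def)
  ultimately have "unit_perp = B \<inter> {h. wprod h h = 1} \<inter> {h. wprod h (\<lambda>_. 1) = 0}"
    by blast
  moreover have "compact B"
    unfolding B_def by (rule compact_PiE_UNIV) auto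
  moreover have "closed {h. wprod h h = 1}" "closed {h. wprod h (\<lambda>_. 1) = 0}"
    unfolding wprod_def
    by (intro closed_Collect_eq continuous_intros continuous_on_product_coordinates)+
  ultimately show ?thesis
    by (simp add: compact_Int_closed)
qed

lemma bform_attains_max_on_unit_perp:
  assumes "unit_perp \<noteq> {}"
  obtains h0 where "h0 \<in> unit_perp" and "\<And>h. h \<in> unit_perp \<Longrightarrow> bform h h \<le> bform h0 h0"
proof -
  have "continuous_on UNIV (\<lambda>h. bform h h)"
    unfolding bform_def by (intro continuous_intros continuous_on_product_coordinates)
  then have "continuous_on unit_perp (\<lambda>h. bform h h)"
    using continuous_on_subset by blast
  then show ?thesis
    using continuous_attains_sup[OF compact_unit_perp assms] that by blast
qed

text \<open>First variation: \<open>t \<mapsto> Q(h0 + t h) - r \<parallel>h0 + t h\<parallel>\<^sup>2\<close> is a quadratic that is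
  nowhere positive and vanishes at \<open>0\<close>, so its linear coefficient vanishes.\<close>
lemma max_on_unit_perp_stationary:
  assumes max: "\<And>h. h \<in> unit_perp \<Longrightarrow> bform h h \<le> bform h0 h0"
    and norm: "wprod h0 h0 = 1" and perp: "wprod h0 (\<lambda>_. 1) = 0"
    and hperp: "wprod h (\<lambda>_. 1) = 0"
  shows "bform h0 h = bform h0 h0 * wprod h0 h"
proof -
  define r where "r = bform h0 h0"
  have "2 * (bform h0 h - r * wprod h0 h) * t + (bform h h - r * wprod h h) * t\<^sup>2 \<le> 0" for t
  proof -
    have "wprod (\<lambda>u. h0 u + t * h u) (\<lambda>_. 1) = 0"
      using perp hperp by (simp add: wprod_add_scaled)
    then have "bform (\<lambda>u. h0 u + t * h u) (\<lambda>u. h0 u + t * h u)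
        \<le> r * wprod (\<lambda>u. h0 u + t * h u) (\<lambda>u. h0 u + t * h u)"
      using bform_le_if_unit_perp_bound[of r] max unfolding r_def by blast
    then show ?thesis
      by (simp add: bform_square_add_scaled wprod_square_add_scaled norm r_def algebra_simps)
  qed
  then show ?thesis
    using linear_coeff_eq_0_if_quadratic_nonpos unfolding r_def
    by (metis mult_eq_0_iff right_minus_eq zero_neq_numeral)
qed

text \<open>Lagrange multipliers: the residual \<open>walk h0 - r h0\<close> is orthogonal to every function.\<close>
lemma max_on_unit_perp_is_eigenfunction:
  assumes h0: "h0 \<in> unit_perp"
    and max: "\<And>h. h \<in> unit_perp \<Longrightarrow> bform h h \<le> bform h0 h0"
    and "u \<in> S"
  shows "walk h0 u = bform h0 h0 * h0 u"
proof -
  define r where "r = bform h0 h0"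
  have norm: "wprod h0 h0 = 1" and perp: "wprod h0 (\<lambda>_. 1) = 0"
    using h0 by (auto simp: unit_perp_def)
  define w where "w = (\<lambda>x. walk h0 x - r * h0 x)"
  have wprod_w: "wprod w h = bform h h0 - r * wprod h0 h" for h
  proof -
    have "wprod w h = (\<Sum>x\<in>S. (\<Sum>y\<in>S. K x y * h0 y) * h x - r * (a x * h0 x * h x))"
      unfolding wprod_def w_def walk_def
    proof (intro sum.cong refl)
      fix x assume "x \<in> S"
      then have "a x \<noteq> 0" using weight_pos by force
      then show "a x * ((\<Sum>y\<in>S. K x y * h0 y) / a x - r * h0 x) * h x
          = (\<Sum>y\<in>S. K x y * h0 y) * h x - r * (a x * h0 x * h x)"
        by (simp add: field_simps)
    qed
    also have "\<dots> = bform h h0 - r * wprod h0 h"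
      unfolding bform_def wprod_def
      by (simp add: sum_subtractf sum_distrib_left sum_distrib_right mult_ac)
    finally show ?thesis .
  qed
  have "wprod w (\<lambda>_. 1) = 0"
    using wprod_w[of "\<lambda>_. 1"] perp bform_one[of h0] bform_comm[of "\<lambda>_. 1" h0] by simp
  then have "wprod w w = 0"
    using wprod_w[of w] max_on_unit_perp_stationary[OF max norm perp] bform_comm[of w h0]
    unfolding r_def by simp
  then show ?thesis
    using wprod_self_eq_0D[of w u] assms(3) unfolding w_def r_def by simp
qed

lemma max_on_unit_perp_le:
  assumes conn: "\<And>u x. u \<in> S \<Longrightarrow> x \<in> S \<Longrightarrow> edge\<^sup>*\<^sup>* u x"
    and gap: "\<And>g \<mu>. \<exists>u\<in>S. g u \<noteq> 0 \<Longrightarrow> \<forall>u\<in>S. g u - walk g u = \<mu> * g u \<Longrightarrow> \<mu> \<noteq> 0 \<Longrightarrow> lam \<le> \<mu>"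
    and h0: "h0 \<in> unit_perp"
    and max: "\<And>h. h \<in> unit_perp \<Longrightarrow> bform h h \<le> bform h0 h0"
  shows "bform h0 h0 \<le> 1 - lam"
proof -
  have norm: "wprod h0 h0 = 1" and perp: "wprod h0 (\<lambda>_. 1) = 0"
    using h0 by (auto simp: unit_perp_def)
  have eigen: "\<forall>u\<in>S. h0 u - walk h0 u = (1 - bform h0 h0) * h0 u"
    using max_on_unit_perp_is_eigenfunction[OF h0 max] by (simp add: algebra_simps)
  obtain u0 where u0: "u0 \<in> S" "h0 u0 \<noteq> 0"
    using norm unfolding wprod_def by (metis (no_types, lifting) mult_zero_right sum.neutral zero_neq_one)
  have "bform h0 h0 \<noteq> 1"
  proof
    assume "bform h0 h0 = 1"
    then have "a x * h0 x * 1 = a x * h0 u0" if "x \<in> S" for x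
      using constant_if_bform_eq_wprod[OF conn _ that u0(1)] norm by simp
    then have "wprod h0 (\<lambda>_. 1) = (\<Sum>u\<in>S. a u * h0 u0)"
      unfolding wprod_def by (rule sum.cong[OF refl])
    also have "\<dots> = h0 u0"
      by (simp add: weight_sum flip: sum_distrib_right)
    finally show False using perp u0(2) by simp
  qed
  then have "lam \<le> 1 - bform h0 h0"
    by (intro gap[OF _ eigen]) (use u0 in auto)
  then show ?thesis by simp
qed

theorem bform_le_spectral_gap:
  assumes conn: "\<And>u x. u \<in> S \<Longrightarrow> x \<in> S \<Longrightarrow> edge\<^sup>*\<^sup>* u x"
    and gap: "\<And>g \<mu>. \<exists>u\<in>S. g u \<noteq> 0 \<Longrightarrow> \<forall>u\<in>S. g u - walk g u = \<mu> * g u \<Longrightarrow> \<mu> \<noteq> 0 \<Longrightarrow> lam \<le> \<mu>"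
  shows "bform g g \<le> lam * (wprod g (\<lambda>_. 1))\<^sup>2 + (1 - lam) * wprod g g"
proof -
  have perp_bound: "bform h h \<le> (1 - lam) * wprod h h" if "wprod h (\<lambda>_. 1) = 0" for h
  proof (rule bform_le_if_unit_perp_bound[OF _ that])
    fix h' assume "h' \<in> unit_perp"
    then obtain h0 where h0: "h0 \<in> unit_perp"
      and max: "\<And>h. h \<in> unit_perp \<Longrightarrow> bform h h \<le> bform h0 h0"
      using bform_attains_max_on_unit_perp by blast
    have "bform h0 h0 \<le> 1 - lam"
      using conn gap h0 max by (rule max_on_unit_perp_le)
    then show "bform h' h' \<le> 1 - lam"
      using max \<open>h' \<in> unit_perp\<close> by (meson order_trans)
  qed
  define c where "c = wprod g (\<lambda>_. 1)"
  define h where "h = (\<lambda>u. g u - c)"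
  have h_perp: "wprod h (\<lambda>_. 1) = 0"
    using wprod_add_scaled[of g "- c" "\<lambda>_. 1" "\<lambda>_. 1"] by (simp add: h_def wprod_one_one c_def)
  have g_eq: "(\<lambda>u. h u + c) = g"
    by (simp add: h_def)
  have "bform g g = bform h h + c\<^sup>2"
    using bform_square_add_scaled[of h c "\<lambda>_. 1"] h_perp
    by (simp add: g_eq bform_one wprod_one_one)
  moreover have "wprod g g = wprod h h + c\<^sup>2"
    using wprod_square_add_scaled[of h c "\<lambda>_. 1"] h_perp
    by (simp add: g_eq wprod_one_one)
  ultimately show ?thesis
    using perp_bound[OF h_perp] unfolding c_def by (simp add: algebra_simps)
qed

end

section \<open>The weighted 1-skeleton of a pure complex\<close>

lemma
  assumes "pure_complex Y k"
  shows pure_complex_finite: "finite Y"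
    and pure_complex_finite_face: "\<sigma> \<in> Y \<Longrightarrow> finite \<sigma>"
    and pure_complex_subset_closed: "\<sigma> \<in> Y \<Longrightarrow> \<tau> \<subseteq> \<sigma> \<Longrightarrow> \<tau> \<in> Y"
    and finite_faces: "finite (faces Y i)"
    and finite_vertices: "finite (vertices Y)"
proof -
  show fin: "finite Y" using assms unfolding pure_complex_def by blast
  then show "finite (faces Y i)" unfolding faces_def by simp
  show "\<sigma> \<in> Y \<Longrightarrow> finite \<sigma>" "\<sigma> \<in> Y \<Longrightarrow> \<tau> \<subseteq> \<sigma> \<Longrightarrow> \<tau> \<in> Y"
    using assms unfolding pure_complex_def by blast+
  have "vertices Y \<subseteq> \<Union>Y" unfolding vertices_def by auto
  moreover have "finite (\<Union>Y)"
    using fin assms unfolding pure_complex_def by (intro finite_Union) auto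
  ultimately show "finite (vertices Y)" by (rule finite_subset)
qed

lemma pure_complex_top_face_superset:
  assumes "pure_complex Y k" and "\<tau> \<in> Y"
  obtains \<sigma> where "\<sigma> \<in> faces Y k" and "\<tau> \<subseteq> \<sigma>"
proof -
  obtain m where "m \<in> Y" "\<tau> \<subseteq> m" "\<forall>b\<in>Y. m \<subseteq> b \<longrightarrow> m = b"
    using finite_has_maximal2[OF pure_complex_finite[OF assms(1)] assms(2)] by blast
  moreover from this have "card m = k + 1"
    using assms(1) unfolding pure_complex_def by metis
  ultimately show ?thesis using that unfolding faces_def by blast
qed

lemma
  assumes "pure_complex Y k" and "\<sigma> \<in> faces Y i"
  shows faces_in_complex: "\<sigma> \<in> Y"
    and card_face: "card \<sigma> = i + 1"
    and finite_face: "finite \<sigma>"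
    and face_subset_vertices: "\<sigma> \<subseteq> vertices Y"
proof -
  show "\<sigma> \<in> Y" "card \<sigma> = i + 1" using assms(2) unfolding faces_def by auto
  then show "finite \<sigma>" "\<sigma> \<subseteq> vertices Y"
    using pure_complex_finite_face[OF assms(1)] pure_complex_subset_closed[OF assms(1)]
    unfolding vertices_def by auto
qed

definition star_sum ::
    "'a set set \<Rightarrow> nat \<Rightarrow> ('a set \<Rightarrow> real) \<Rightarrow> 'a \<Rightarrow> ('a set \<Rightarrow> real) \<Rightarrow> real" where
  "star_sum Y k P v F = (\<Sum>\<sigma>\<in>faces Y k. if v \<in> \<sigma> then P \<sigma> * F \<sigma> else 0)"

abbreviation vertex_mass :: "'a set set \<Rightarrow> nat \<Rightarrow> ('a set \<Rightarrow> real) \<Rightarrow> 'a \<Rightarrow> real" where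
  "vertex_mass Y k P v \<equiv> star_sum Y k P v (\<lambda>_. 1)"

definition face_sum :: "'a set set \<Rightarrow> nat \<Rightarrow> ('a set \<Rightarrow> real) \<Rightarrow> ('a \<Rightarrow> real) \<Rightarrow> real" where
  "face_sum Y k P g = (\<Sum>\<sigma>\<in>faces Y k. P \<sigma> * sum g \<sigma>)"

definition pair_sum :: "('a \<Rightarrow> real) \<Rightarrow> 'a set \<Rightarrow> real" where
  "pair_sum g A = (\<Sum>u\<in>A. g u * sum g (A - {u}))"

definition face_pair_sum :: "'a set set \<Rightarrow> nat \<Rightarrow> ('a set \<Rightarrow> real) \<Rightarrow> ('a \<Rightarrow> real) \<Rightarrow> real" where
  "face_pair_sum Y k P g = (\<Sum>\<sigma>\<in>faces Y k. P \<sigma> * pair_sum g \<sigma>)"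

lemma sum_vertices_star_sum:
  assumes "pure_complex Y k"
  shows "(\<Sum>v\<in>vertices Y. star_sum Y k P v (F v)) = (\<Sum>\<sigma>\<in>faces Y k. P \<sigma> * (\<Sum>v\<in>\<sigma>. F v \<sigma>))"
proof -
  have "(\<Sum>v\<in>vertices Y. star_sum Y k P v (F v))
      = (\<Sum>\<sigma>\<in>faces Y k. \<Sum>v\<in>vertices Y. if v \<in> \<sigma> then P \<sigma> * F v \<sigma> else 0)"
    unfolding star_sum_def by (rule sum.swap)
  also have "\<dots> = (\<Sum>\<sigma>\<in>faces Y k. P \<sigma> * (\<Sum>v\<in>\<sigma>. F v \<sigma>))"
  proof (rule sum.cong[OF refl])
    fix \<sigma> assume "\<sigma> \<in> faces Y k"
    then have "vertices Y \<inter> \<sigma> = \<sigma>" using face_subset_vertices[OF assms] by blast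
    then show "(\<Sum>v\<in>vertices Y. if v \<in> \<sigma> then P \<sigma> * F v \<sigma> else 0) = P \<sigma> * (\<Sum>v\<in>\<sigma>. F v \<sigma>)"
      using sum.inter_restrict[OF finite_vertices[OF assms], of "\<lambda>v. P \<sigma> * F v \<sigma>" \<sigma>]
      by (simp add: sum_distrib_left)
  qed
  finally show ?thesis .
qed

lemma mult_star_sum: "c * star_sum Y k P v F = star_sum Y k P v (\<lambda>\<sigma>. c * F \<sigma>)"
  unfolding star_sum_def sum_distrib_left by (intro sum.cong refl) (simp add: mult_ac)

lemma sum_vertices_mult_vertex_mass:
  assumes "pure_complex Y k"
  shows "(\<Sum>v\<in>vertices Y. g v * vertex_mass Y k P v) = face_sum Y k P g"
proof -
  have "(\<Sum>v\<in>vertices Y. g v * vertex_mass Y k P v) = (\<Sum>v\<in>vertices Y. star_sum Y k P v (\<lambda>_. g v))"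
    unfolding star_sum_def sum_distrib_left by (intro sum.cong refl) (simp add: mult.commute)
  also have "\<dots> = face_sum Y k P g"
    unfolding face_sum_def by (rule sum_vertices_star_sum[OF assms])
  finally show ?thesis .
qed

lemma weight_singleton:
  assumes "pure_complex Y k"
  shows "weight Y k P {u} = vertex_mass Y k P u / (real k + 1)"
  unfolding weight_def star_sum_def mult_1_right
  by (simp add: sum.inter_filter[OF finite_faces[OF assms]] add.commute)

lemma weight_pair:
  assumes "pure_complex Y k" and "u \<noteq> x"
  shows "weight Y k P {u, x}
    = (\<Sum>\<sigma>\<in>faces Y k. if u \<in> \<sigma> \<and> x \<in> \<sigma> then P \<sigma> else 0) / real ((k + 1) choose 2)"
  using assms(2) unfolding weight_def
  by (simp add: sum.inter_filter[OF finite_faces[OF assms(1)]] numeral_2_eq_2)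

lemma weight_pos:
  assumes "pure_complex Y k" and "prob_dist Y k P" and "\<tau> \<in> Y"
  shows "0 < weight Y k P \<tau>"
proof -
  obtain \<sigma> where "\<sigma> \<in> faces Y k" "\<tau> \<subseteq> \<sigma>"
    using pure_complex_top_face_superset[OF assms(1,3)] .
  then have "card \<tau> \<le> k + 1"
    using card_mono[OF finite_face[OF assms(1)]] card_face[OF assms(1)] by metis
  moreover have "\<forall>\<sigma>\<in>faces Y k. 0 < P \<sigma>" using assms(2) unfolding prob_dist_def by blast
  moreover have "0 < (\<Sum>\<sigma>\<in>{\<sigma>\<in>faces Y k. \<tau> \<subseteq> \<sigma>}. P \<sigma>)"
    using finite_faces[OF assms(1)] \<open>\<sigma> \<in> faces Y k\<close> \<open>\<tau> \<subseteq> \<sigma>\<close> calculation(2)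
    by (intro sum_pos2[of _ \<sigma>]) (auto intro: less_imp_le)
  ultimately show ?thesis unfolding weight_def by simp
qed

lemma weight_eq_0:
  assumes "pure_complex Y k" and "\<tau> \<notin> Y"
  shows "weight Y k P \<tau> = 0"
proof -
  have no_top_face: "{\<sigma>\<in>faces Y k. \<tau> \<subseteq> \<sigma>} = {}"
    using assms pure_complex_subset_closed[OF assms(1) faces_in_complex[OF assms(1)]] by blast
  show ?thesis unfolding weight_def by (simp only: no_top_face sum.empty div_0)
qed

lemma weight_nonneg:
  assumes "pure_complex Y k" and "prob_dist Y k P"
  shows "0 \<le> weight Y k P \<tau>"
  using weight_pos[OF assms] weight_eq_0[OF assms(1)] by (cases "\<tau> \<in> Y") (auto intro: less_imp_le)

lemma vertex_mass_pos:
  assumes "pure_complex Y k" and "prob_dist Y k P" and "v \<in> vertices Y"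
  shows "0 < vertex_mass Y k P v"
  using weight_pos[OF assms(1,2), of "{v}"] assms(3)
  by (simp add: weight_singleton[OF assms(1)] vertices_def zero_less_divide_iff)

text \<open>With this kernel and the vertex weights \<open>w({u})\<close>, the normalised adjacency operator
  becomes the walk operator of a weighted graph.\<close>
definition edge_kernel :: "'a set set \<Rightarrow> nat \<Rightarrow> ('a set \<Rightarrow> real) \<Rightarrow> 'a \<Rightarrow> 'a \<Rightarrow> real" where
  "edge_kernel Y k P u x = (if u = x then 0 else weight Y k P {u, x} / 2)"

lemma edge_kernel_eq_faces:
  assumes "pure_complex Y k"
  shows "edge_kernel Y k P u x
    = (\<Sum>\<sigma>\<in>faces Y k. if u \<noteq> x \<and> u \<in> \<sigma> \<and> x \<in> \<sigma> then P \<sigma> else 0) / (real k * (real k + 1))"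
proof (cases "u = x")
  case False
  have "((k + 1) choose 2) * 2 = (k + 1) * k"
    unfolding choose_two by simp
  then have "real ((k + 1) choose 2) * 2 = real k * (real k + 1)"
    by (metis add.commute of_nat_1 of_nat_add of_nat_mult of_nat_numeral mult.commute)
  then show ?thesis
    using False by (simp add: edge_kernel_def weight_pair[OF assms] field_simps)
qed (simp add: edge_kernel_def)

lemma sum_remove_eq_sum_if:
  assumes "finite A"
  shows "(\<Sum>x\<in>A. if x \<noteq> u then g x else 0) = sum g (A - {u})"
  using sum.inter_restrict[OF assms, of g "- {u}"] by (simp add: Diff_eq)

lemma sum_edge_kernel:
  assumes pc: "pure_complex Y k"
  shows "(\<Sum>x\<in>vertices Y. edge_kernel Y k P u x * g x)
    = star_sum Y k P u (\<lambda>\<sigma>. sum g (\<sigma> - {u})) / (real k * (real k + 1))"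
proof -
  have "edge_kernel Y k P u x * g x
      = star_sum Y k P x (\<lambda>\<sigma>. if u \<in> \<sigma> \<and> x \<noteq> u then g x else 0) / (real k * (real k + 1))" for x
    unfolding edge_kernel_eq_faces[OF pc] star_sum_def sum_divide_distrib sum_distrib_right
    by (intro sum.cong refl) auto
  then have "(\<Sum>x\<in>vertices Y. edge_kernel Y k P u x * g x)
      = (\<Sum>\<sigma>\<in>faces Y k. P \<sigma> * (\<Sum>x\<in>\<sigma>. if u \<in> \<sigma> \<and> x \<noteq> u then g x else 0)) / (real k * (real k + 1))"
    by (simp add: sum_vertices_star_sum[OF pc] flip: sum_divide_distrib)
  also have "(\<Sum>\<sigma>\<in>faces Y k. P \<sigma> * (\<Sum>x\<in>\<sigma>. if u \<in> \<sigma> \<and> x \<noteq> u then g x else 0))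
      = star_sum Y k P u (\<lambda>\<sigma>. sum g (\<sigma> - {u}))"
    unfolding star_sum_def
    by (intro sum.cong refl) (simp add: sum_remove_eq_sum_if[OF finite_face[OF pc]])
  finally show ?thesis .
qed

lemma edge_kernel_row_sum:
  assumes pc: "pure_complex Y k" and "1 \<le> k"
  shows "(\<Sum>x\<in>vertices Y. edge_kernel Y k P u x) = weight Y k P {u}"
proof -
  have "star_sum Y k P u (\<lambda>\<sigma>. real (card (\<sigma> - {u}))) = star_sum Y k P u (\<lambda>_. real k)"
    unfolding star_sum_def
    by (intro sum.cong refl) (simp add: card_face[OF pc] finite_face[OF pc])
  also have "\<dots> = real k * vertex_mass Y k P u"
    using mult_star_sum[of "real k" Y k P u "\<lambda>_. 1"] by simp
  finally show ?thesis
    using sum_edge_kernel[OF pc, of P u "\<lambda>_. 1"] assms(2)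
    by (simp add: weight_singleton[OF pc])
qed

lemma adjacency_eq_kernel:
  assumes pc: "pure_complex Y k"
  shows "adjacency Y k P g u = (\<Sum>x\<in>vertices Y. edge_kernel Y k P u x * g x) / weight Y k P {u}"
proof -
  define N where "N = {x. {x, u} \<in> faces Y 1}"
  have N_vertices: "N \<subseteq> vertices Y"
    using pure_complex_subset_closed[OF pc] unfolding N_def faces_def vertices_def by blast
  have "weight Y k P {u, x} = 2 * edge_kernel Y k P u x" if "x \<in> N" for x
    using that unfolding N_def faces_def edge_kernel_def by (auto simp: card_insert_if)
  then have "adjacency Y k P g u = (\<Sum>x\<in>N. edge_kernel Y k P u x * g x / weight Y k P {u})"
    unfolding adjacency_def N_def by (intro sum.cong refl) simp
  also have "\<dots> = (\<Sum>x\<in>vertices Y. edge_kernel Y k P u x * g x / weight Y k P {u})"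
  proof (rule sum.mono_neutral_left[OF finite_vertices[OF pc] N_vertices], intro ballI)
    fix x assume "x \<in> vertices Y - N"
    then have "x = u \<or> {u, x} \<notin> Y"
      unfolding N_def faces_def by (auto simp: card_insert_if insert_commute)
    then show "edge_kernel Y k P u x * g x / weight Y k P {u} = 0"
      unfolding edge_kernel_def using weight_eq_0[OF pc] by auto
  qed
  finally show ?thesis by (simp add: sum_divide_distrib)
qed

lemma adjacency_eq_star_sum:
  assumes pc: "pure_complex Y k"
  shows "adjacency Y k P g u = star_sum Y k P u (\<lambda>\<sigma>. sum g (\<sigma> - {u})) / (real k * vertex_mass Y k P u)"
proof -
  have "real k + 1 \<noteq> 0" by simp
  then show ?thesis
    unfolding adjacency_eq_kernel[OF pc] sum_edge_kernel[OF pc] weight_singleton[OF pc]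
    by (simp add: divide_divide_eq_left divide_divide_eq_right mult.assoc)
qed

lemma sum_vertices_mult_star_sum_remove:
  assumes pc: "pure_complex Y k"
  shows "(\<Sum>v\<in>vertices Y. g v * star_sum Y k P v (\<lambda>\<sigma>. sum g (\<sigma> - {v}))) = face_pair_sum Y k P g"
  unfolding mult_star_sum sum_vertices_star_sum[OF pc] face_pair_sum_def pair_sum_def ..

lemma complex_weighted_graph:
  assumes pc: "pure_complex Y k" and "1 \<le> k" and pd: "prob_dist Y k P"
  shows "weighted_graph (vertices Y) (\<lambda>u. weight Y k P {u}) (edge_kernel Y k P)"
proof
  show "finite (vertices Y)" by (rule finite_vertices[OF pc])
  show "0 < weight Y k P {u}" if "u \<in> vertices Y" for u
    using that weight_pos[OF pc pd] unfolding vertices_def by blast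
  have "face_sum Y k P (\<lambda>_. 1) = (\<Sum>\<sigma>\<in>faces Y k. P \<sigma> * (real k + 1))"
    unfolding face_sum_def by (intro sum.cong refl) (simp add: card_face[OF pc])
  also have "\<dots> = real k + 1"
    using pd unfolding prob_dist_def by (simp flip: sum_distrib_right)
  finally show "(\<Sum>u\<in>vertices Y. weight Y k P {u}) = 1"
    using sum_vertices_mult_vertex_mass[OF pc, of "\<lambda>_. 1" P]
    by (simp add: weight_singleton[OF pc] flip: sum_divide_distrib)
  show "edge_kernel Y k P u x = edge_kernel Y k P x u" for u x
    by (simp add: edge_kernel_def insert_commute)
  show "0 \<le> edge_kernel Y k P u x" for u x
    using weight_nonneg[OF pc pd] by (simp add: edge_kernel_def)
  show "(\<Sum>x\<in>vertices Y. edge_kernel Y k P u x) = weight Y k P {u}" for u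
    by (rule edge_kernel_row_sum[OF pc \<open>1 \<le> k\<close>])
qed

theorem face_pair_sum_le_spectral_gap:
  assumes pc: "pure_complex Y k" and k: "1 \<le> k" and pd: "prob_dist Y k P"
    and conn: "skeleton_connected Y"
    and gap: "\<forall>\<mu>. laplacian_eigenvalue Y k P \<mu> \<and> \<mu> \<noteq> 0 \<longrightarrow> \<mu> \<ge> lam"
  shows "face_pair_sum Y k P g / (real k * (real k + 1))
    \<le> lam * (face_sum Y k P g / (real k + 1))\<^sup>2
      + (1 - lam) * (face_sum Y k P (\<lambda>u. (g u)\<^sup>2) / (real k + 1))"
proof -
  interpret G: weighted_graph "vertices Y" "\<lambda>u. weight Y k P {u}" "edge_kernel Y k P"
    by (rule complex_weighted_graph[OF pc k pd])
  have "G.edge a b" if "{a, b} \<in> faces Y 1" for a b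
  proof -
    have "a \<noteq> b" "{a, b} \<in> Y" using that unfolding faces_def by auto
    then show ?thesis
      unfolding G.edge_def using weight_pos[OF pc pd] pure_complex_subset_closed[OF pc]
      by (auto simp: edge_kernel_def vertices_def)
  qed
  then have G_conn: "G.edge\<^sup>*\<^sup>* u x" if "u \<in> vertices Y" "x \<in> vertices Y" for u x
    using conn that unfolding skeleton_connected_def by (metis (no_types, lifting) mono_rtranclp)
  have G_gap: "lam \<le> \<mu>"
    if "\<exists>u\<in>vertices Y. f u \<noteq> 0" "\<forall>u\<in>vertices Y. f u - G.walk f u = \<mu> * f u" "\<mu> \<noteq> 0" for f \<mu>
    using gap that
    unfolding laplacian_eigenvalue_def laplacian_def G.walk_def adjacency_eq_kernel[OF pc] by blast
  have "G.bform g g = (\<Sum>u\<in>vertices Y. g u * (\<Sum>x\<in>vertices Y. edge_kernel Y k P u x * g x))"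
    unfolding G.bform_def by (simp add: sum_distrib_left mult_ac)
  also have "\<dots> = face_pair_sum Y k P g / (real k * (real k + 1))"
    unfolding sum_edge_kernel[OF pc] times_divide_eq_right sum_vertices_mult_star_sum_remove[OF pc, symmetric]
    by (rule sum_divide_distrib[symmetric])
  finally have "G.bform g g = face_pair_sum Y k P g / (real k * (real k + 1))" .
  moreover have "G.wprod g h = face_sum Y k P (\<lambda>u. g u * h u) / (real k + 1)" for h
  proof -
    have "G.wprod g h = (\<Sum>u\<in>vertices Y. g u * h u * vertex_mass Y k P u) / (real k + 1)"
      unfolding G.wprod_def by (simp add: weight_singleton[OF pc] sum_divide_distrib mult_ac)
    then show ?thesis by (simp only: sum_vertices_mult_vertex_mass[OF pc])
  qed
  ultimately show ?thesis
    using G.bform_le_spectral_gap[OF G_conn G_gap, where g = g] by (simp add: power2_eq_square)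
qed

section \<open>Links of vertices\<close>

lemma link_singleton_eq: "link X {v} = (\<lambda>\<sigma>. \<sigma> - {v}) ` {\<sigma>\<in>X. v \<in> \<sigma>}"
  unfolding link_def by auto

lemma pure_complex_link:
  assumes pc: "pure_complex X d" and "1 \<le> d"
  shows "pure_complex (link X {v}) (d - 1)"
  unfolding pure_complex_def
proof (intro conjI ballI allI impI)
  show "finite (link X {v})"
    unfolding link_singleton_eq using pure_complex_finite[OF pc] by simp
  fix \<eta> assume "\<eta> \<in> link X {v}"
  then obtain \<sigma> where \<sigma>: "\<sigma> \<in> X" "v \<in> \<sigma>" "\<eta> = \<sigma> - {v}"
    unfolding link_singleton_eq by blast
  show "finite \<eta>" using \<sigma> pure_complex_finite_face[OF pc] by simp
  show "\<tau> \<in> link X {v}" if "\<tau> \<subseteq> \<eta>" for \<tau>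
  proof -
    have "insert v \<tau> \<in> X" using \<sigma> that pure_complex_subset_closed[OF pc] by blast
    moreover have "\<tau> = insert v \<tau> - {v}" using \<sigma> that by blast
    ultimately show ?thesis unfolding link_singleton_eq by blast
  qed
  assume max: "\<forall>\<tau>\<in>link X {v}. \<eta> \<subseteq> \<tau> \<longrightarrow> \<tau> = \<eta>"
  have "\<tau> = \<sigma>" if "\<tau> \<in> X" "\<sigma> \<subseteq> \<tau>" for \<tau>
  proof -
    have "\<tau> - {v} \<in> link X {v}" "\<eta> \<subseteq> \<tau> - {v}"
      using \<sigma> that unfolding link_singleton_eq by auto
    then show ?thesis using max \<sigma> that by blast
  qed
  then have "card \<sigma> = d + 1"
    using pc \<sigma>(1) unfolding pure_complex_def by blast
  then show "card \<eta> = d - 1 + 1"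
    using \<sigma> \<open>1 \<le> d\<close> pure_complex_finite_face[OF pc] by (simp add: card_Diff_singleton)
qed

lemma faces_link:
  assumes pc: "pure_complex X d" and "1 \<le> d"
  shows "faces (link X {v}) (d - 1) = (\<lambda>\<sigma>. \<sigma> - {v}) ` {\<sigma>\<in>faces X d. v \<in> \<sigma>}"
proof (intro set_eqI iffI)
  fix \<eta> assume \<eta>: "\<eta> \<in> faces (link X {v}) (d - 1)"
  then obtain \<sigma> where \<sigma>: "\<sigma> \<in> X" "v \<in> \<sigma>" "\<eta> = \<sigma> - {v}"
    unfolding faces_def link_singleton_eq by blast
  have "card \<sigma> = card \<eta> + 1"
    using card_Suc_Diff1[OF pure_complex_finite_face[OF pc \<sigma>(1)] \<sigma>(2)] \<sigma>(3) by simp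
  then show "\<eta> \<in> (\<lambda>\<sigma>. \<sigma> - {v}) ` {\<sigma>\<in>faces X d. v \<in> \<sigma>}"
    using \<eta> \<sigma> \<open>1 \<le> d\<close> unfolding faces_def by auto
next
  fix \<eta> assume "\<eta> \<in> (\<lambda>\<sigma>. \<sigma> - {v}) ` {\<sigma>\<in>faces X d. v \<in> \<sigma>}"
  then obtain \<sigma> where \<sigma>: "\<sigma> \<in> faces X d" "v \<in> \<sigma>" "\<eta> = \<sigma> - {v}" by blast
  then have "card \<eta> = d - 1 + 1"
    using \<open>1 \<le> d\<close> card_face[OF pc] finite_face[OF pc] by (simp add: card_Diff_singleton)
  moreover have "\<eta> \<in> link X {v}"
    using \<sigma> faces_in_complex[OF pc] unfolding link_singleton_eq by blast
  ultimately show "\<eta> \<in> faces (link X {v}) (d - 1)" unfolding faces_def by blast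
qed

lemma sum_faces_link:
  assumes pc: "pure_complex X d" and "1 \<le> d"
  shows "(\<Sum>\<eta>\<in>faces (link X {v}) (d - 1). link_dist X d P {v} \<eta> * F \<eta>)
    = star_sum X d P v (\<lambda>\<sigma>. F (\<sigma> - {v})) / vertex_mass X d P v"
proof -
  have mass: "(\<Sum>\<sigma>\<in>{\<sigma>\<in>faces X d. {v} \<subseteq> \<sigma>}. P \<sigma>) = vertex_mass X d P v"
    unfolding star_sum_def mult_1_right by (simp add: sum.inter_filter[OF finite_faces[OF pc]])
  have "inj_on (\<lambda>\<sigma>. \<sigma> - {v}) {\<sigma>\<in>faces X d. v \<in> \<sigma>}"
    by (rule inj_onI) blast
  then have "(\<Sum>\<eta>\<in>faces (link X {v}) (d - 1). link_dist X d P {v} \<eta> * F \<eta>)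
      = (\<Sum>\<sigma>\<in>{\<sigma>\<in>faces X d. v \<in> \<sigma>}. link_dist X d P {v} (\<sigma> - {v}) * F (\<sigma> - {v}))"
    unfolding faces_link[OF assms] by (rule sum.reindex_cong) auto
  also have "\<dots> = (\<Sum>\<sigma>\<in>{\<sigma>\<in>faces X d. v \<in> \<sigma>}. P \<sigma> * F (\<sigma> - {v})) / vertex_mass X d P v"
    unfolding sum_divide_distrib link_dist_def mass
    by (intro sum.cong refl) (auto simp: insert_absorb)
  also have "\<dots> = star_sum X d P v (\<lambda>\<sigma>. F (\<sigma> - {v})) / vertex_mass X d P v"
    unfolding star_sum_def by (simp add: sum.inter_filter[OF finite_faces[OF pc]])
  finally show ?thesis .
qed

lemma prob_dist_link:
  assumes pc: "pure_complex X d" and "1 \<le> d" and pd: "prob_dist X d P" and v: "v \<in> vertices X"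
  shows "prob_dist (link X {v}) (d - 1) (link_dist X d P {v})"
  unfolding prob_dist_def
proof
  have "0 < P (\<eta> \<union> {v})" if "\<eta> \<in> faces (link X {v}) (d - 1)" for \<eta>
    using that pd unfolding faces_link[OF pc \<open>1 \<le> d\<close>] prob_dist_def by (auto simp: insert_absorb)
  moreover have "(\<Sum>\<sigma>\<in>{\<sigma>\<in>faces X d. {v} \<subseteq> \<sigma>}. P \<sigma>) = vertex_mass X d P v"
    unfolding star_sum_def mult_1_right by (simp add: sum.inter_filter[OF finite_faces[OF pc]])
  ultimately show "\<forall>\<eta>\<in>faces (link X {v}) (d - 1). 0 < link_dist X d P {v} \<eta>"
    using vertex_mass_pos[OF pc pd v] by (simp add: link_dist_def)
  show "(\<Sum>\<eta>\<in>faces (link X {v}) (d - 1). link_dist X d P {v} \<eta>) = 1"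
    using sum_faces_link[OF pc \<open>1 \<le> d\<close>, where F = "\<lambda>_. 1"] vertex_mass_pos[OF pc pd v] by simp
qed

section \<open>From the links to the complex\<close>

lemma pair_sum_eq:
  assumes "finite A"
  shows "pair_sum g A = (sum g A)\<^sup>2 - (\<Sum>u\<in>A. (g u)\<^sup>2)"
proof -
  have "pair_sum g A = (\<Sum>u\<in>A. g u * sum g A - (g u)\<^sup>2)"
    unfolding pair_sum_def
    by (intro sum.cong refl) (simp add: sum_diff1[OF assms] algebra_simps power2_eq_square)
  then show ?thesis
    by (simp add: sum_subtractf power2_eq_square flip: sum_distrib_right)
qed

lemma sum_sum_remove:
  assumes "finite A"
  shows "(\<Sum>v\<in>A. sum h (A - {v})) = (real (card A) - 1) * sum h A"
proof -
  have "(\<Sum>v\<in>A. sum h (A - {v})) = (\<Sum>v\<in>A. sum h A - h v)"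
    by (intro sum.cong refl) (simp add: sum_diff1[OF assms])
  then show ?thesis by (simp add: sum_subtractf algebra_simps)
qed

lemma sum_pair_sum_remove:
  assumes "finite A"
  shows "(\<Sum>v\<in>A. pair_sum g (A - {v})) = (real (card A) - 2) * pair_sum g A"
proof -
  define s1 where "s1 = sum g A"
  define s2 where "s2 = (\<Sum>u\<in>A. (g u)\<^sup>2)"
  have "(\<Sum>v\<in>A. pair_sum g (A - {v})) = (\<Sum>v\<in>A. (s1 - g v)\<^sup>2 - (s2 - (g v)\<^sup>2))"
    using assms
    by (intro sum.cong refl) (simp add: pair_sum_eq sum_diff1 s1_def s2_def)
  also have "\<dots> = (\<Sum>v\<in>A. s1\<^sup>2 - s2 - 2 * s1 * g v + 2 * (g v)\<^sup>2)"
    by (intro sum.cong refl) (simp add: power2_diff algebra_simps)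
  also have "\<dots> = real (card A) * (s1\<^sup>2 - s2) - 2 * s1 * s1 + 2 * s2"
    unfolding s1_def s2_def by (simp add: sum.distrib sum_subtractf flip: sum_distrib_left)
  also have "\<dots> = (real (card A) - 2) * pair_sum g A"
    using assms by (simp add: pair_sum_eq s1_def s2_def algebra_simps power2_eq_square)
  finally show ?thesis .
qed

lemma pair_sum_le: "pair_sum g A \<le> (real (card A) - 1) * (\<Sum>u\<in>A. (g u)\<^sup>2)"
proof (cases "finite A")
  case True
  then show ?thesis
    using sum_squared_le_sum_of_squares[of g A] by (simp add: pair_sum_eq algebra_simps)
qed (simp add: pair_sum_def)

lemma sum_vertices_star_sum_remove:
  assumes pc: "pure_complex Y k"
  shows "(\<Sum>v\<in>vertices Y. star_sum Y k P v (\<lambda>\<sigma>. sum h (\<sigma> - {v}))) = real k * face_sum Y k P h"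
proof -
  have "(\<Sum>v\<in>vertices Y. star_sum Y k P v (\<lambda>\<sigma>. sum h (\<sigma> - {v})))
      = (\<Sum>\<sigma>\<in>faces Y k. real k * (P \<sigma> * sum h \<sigma>))"
    unfolding sum_vertices_star_sum[OF pc]
    by (intro sum.cong refl) (simp add: sum_sum_remove finite_face[OF pc] card_face[OF pc])
  then show ?thesis
    unfolding face_sum_def by (simp only: sum_distrib_left)
qed

lemma sum_vertices_star_pair_sum_remove:
  assumes pc: "pure_complex Y k"
  shows "(\<Sum>v\<in>vertices Y. star_sum Y k P v (\<lambda>\<sigma>. pair_sum g (\<sigma> - {v})))
    = (real k - 1) * face_pair_sum Y k P g"
proof -
  have "(\<Sum>v\<in>vertices Y. star_sum Y k P v (\<lambda>\<sigma>. pair_sum g (\<sigma> - {v})))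
      = (\<Sum>\<sigma>\<in>faces Y k. (real k - 1) * (P \<sigma> * pair_sum g \<sigma>))"
    unfolding sum_vertices_star_sum[OF pc]
    by (intro sum.cong refl) (simp add: sum_pair_sum_remove finite_face[OF pc] card_face[OF pc])
  then show ?thesis
    unfolding face_pair_sum_def by (simp only: sum_distrib_left)
qed

lemma face_sum_square_pos:
  assumes pc: "pure_complex Y k" and pd: "prob_dist Y k P"
    and nonzero: "\<exists>v\<in>vertices Y. f v \<noteq> 0"
  shows "0 < face_sum Y k P (\<lambda>u. (f u)\<^sup>2)"
proof -
  obtain v where v: "v \<in> vertices Y" "f v \<noteq> 0" using nonzero by blast
  have "0 \<le> (f u)\<^sup>2 * vertex_mass Y k P u" if "u \<in> vertices Y" for u
    using vertex_mass_pos[OF pc pd that] by simp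
  moreover have "0 < (f v)\<^sup>2 * vertex_mass Y k P v"
    using vertex_mass_pos[OF pc pd v(1)] v(2) by simp
  ultimately show ?thesis
    unfolding sum_vertices_mult_vertex_mass[OF pc, symmetric]
    by (intro sum_pos2[OF finite_vertices[OF pc] v(1)])
qed

lemma face_pair_sum_le:
  assumes pc: "pure_complex Y k" and pd: "prob_dist Y k P"
  shows "face_pair_sum Y k P g \<le> real k * face_sum Y k P (\<lambda>u. (g u)\<^sup>2)"
proof -
  have "P \<sigma> * pair_sum g \<sigma> \<le> real k * (P \<sigma> * (\<Sum>u\<in>\<sigma>. (g u)\<^sup>2))" if "\<sigma> \<in> faces Y k" for \<sigma>
    using pair_sum_le[of g \<sigma>] pd card_face[OF pc that] that
    by (simp add: prob_dist_def mult_left_mono mult.left_commute less_imp_le)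
  then show ?thesis
    unfolding face_pair_sum_def face_sum_def sum_distrib_left by (rule sum_mono)
qed

lemma link_spectral_gap_bound:
  assumes pc: "pure_complex X d" and "2 \<le> d" and pd: "prob_dist X d P" and v: "v \<in> vertices X"
    and conn: "skeleton_connected (link X {v})"
    and gap: "\<forall>\<mu>. laplacian_eigenvalue (link X {v}) (d - 1) (link_dist X d P {v}) \<mu> \<and> \<mu> \<noteq> 0 \<longrightarrow> \<mu> \<ge> lam"
  shows "star_sum X d P v (\<lambda>\<sigma>. pair_sum g (\<sigma> - {v})) / ((real d - 1) * real d)
    \<le> lam * (star_sum X d P v (\<lambda>\<sigma>. sum g (\<sigma> - {v})))\<^sup>2 / ((real d)\<^sup>2 * vertex_mass X d P v)
      + (1 - lam) * star_sum X d P v (\<lambda>\<sigma>. \<Sum>u\<in>\<sigma> - {v}. (g u)\<^sup>2) / real d"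
proof -
  have d: "1 \<le> d" "1 \<le> d - 1" "real (d - 1) = real d - 1" "0 < real d - 1"
    using \<open>2 \<le> d\<close> by auto
  define m where "m = vertex_mass X d P v"
  define q where "q = star_sum X d P v (\<lambda>\<sigma>. pair_sum g (\<sigma> - {v}))"
  define s where "s = star_sum X d P v (\<lambda>\<sigma>. sum g (\<sigma> - {v}))"
  define n where "n = star_sum X d P v (\<lambda>\<sigma>. \<Sum>u\<in>\<sigma> - {v}. (g u)\<^sup>2)"
  have "0 < m" unfolding m_def by (rule vertex_mass_pos[OF pc pd v])
  have "face_pair_sum (link X {v}) (d - 1) (link_dist X d P {v}) g = q / m"
    and "face_sum (link X {v}) (d - 1) (link_dist X d P {v}) g = s / m"
    and "face_sum (link X {v}) (d - 1) (link_dist X d P {v}) (\<lambda>u. (g u)\<^sup>2) = n / m"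
    unfolding face_pair_sum_def face_sum_def m_def q_def s_def n_def
    by (rule sum_faces_link[OF pc d(1)])+
  then have "q / m / ((real d - 1) * real d) \<le> lam * (s / m / real d)\<^sup>2 + (1 - lam) * (n / m / real d)"
    using face_pair_sum_le_spectral_gap[OF pure_complex_link[OF pc d(1)] d(2)
        prob_dist_link[OF pc d(1) pd v] conn gap, where g = g]
    unfolding d(3) by simp
  then have "m * (q / m / ((real d - 1) * real d))
      \<le> m * (lam * (s / m / real d)\<^sup>2 + (1 - lam) * (n / m / real d))"
    using \<open>0 < m\<close> by (intro mult_left_mono) auto
  moreover have "m * (q / m / ((real d - 1) * real d)) = q / ((real d - 1) * real d)"
    and "m * (lam * (s / m / real d)\<^sup>2 + (1 - lam) * (n / m / real d))
      = lam * s\<^sup>2 / ((real d)\<^sup>2 * m) + (1 - lam) * n / real d"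
    using \<open>0 < m\<close> d(4) by (simp_all add: field_simps power2_eq_square)
  ultimately show ?thesis unfolding m_def q_def s_def n_def by simp
qed

lemma face_pair_sum_le_link_bounds:
  assumes pc: "pure_complex X d" and "2 \<le> d" and pd: "prob_dist X d P"
    and conn: "\<forall>v\<in>vertices X. skeleton_connected (link X {v})"
    and gap: "\<forall>v\<in>vertices X. \<forall>\<mu>. laplacian_eigenvalue (link X {v}) (d - 1) (link_dist X d P {v}) \<mu>
            \<and> \<mu> \<noteq> 0 \<longrightarrow> \<mu> \<ge> lam"
  shows "face_pair_sum X d P g / real d
    \<le> lam * (\<Sum>v\<in>vertices X. (star_sum X d P v (\<lambda>\<sigma>. sum g (\<sigma> - {v})))\<^sup>2
                              / ((real d)\<^sup>2 * vertex_mass X d P v))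
      + (1 - lam) * face_sum X d P (\<lambda>u. (g u)\<^sup>2)"
proof -
  have "(\<Sum>v\<in>vertices X. star_sum X d P v (\<lambda>\<sigma>. pair_sum g (\<sigma> - {v})) / ((real d - 1) * real d))
      \<le> (\<Sum>v\<in>vertices X. lam * (star_sum X d P v (\<lambda>\<sigma>. sum g (\<sigma> - {v})))\<^sup>2
              / ((real d)\<^sup>2 * vertex_mass X d P v)
          + (1 - lam) * star_sum X d P v (\<lambda>\<sigma>. \<Sum>u\<in>\<sigma> - {v}. (g u)\<^sup>2) / real d)"
    using link_spectral_gap_bound[OF pc \<open>2 \<le> d\<close> pd] conn gap by (intro sum_mono) auto
  also have "\<dots> = lam * (\<Sum>v\<in>vertices X. (star_sum X d P v (\<lambda>\<sigma>. sum g (\<sigma> - {v})))\<^sup>2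
                              / ((real d)\<^sup>2 * vertex_mass X d P v))
      + (1 - lam) * (\<Sum>v\<in>vertices X. star_sum X d P v (\<lambda>\<sigma>. \<Sum>u\<in>\<sigma> - {v}. (g u)\<^sup>2)) / real d"
    by (simp add: sum.distrib sum_distrib_left flip: sum_divide_distrib)
  finally show ?thesis
    using \<open>2 \<le> d\<close>
    by (simp add: sum.distrib sum_vertices_star_pair_sum_remove[OF pc] sum_vertices_star_sum_remove[OF pc]
        times_divide_eq_right flip: sum_distrib_left sum_divide_distrib)
qed

lemma adjacency_eigenvalue_bounds:
  assumes pc: "pure_complex X d" and "2 \<le> d" and pd: "prob_dist X d P"
    and conn: "\<forall>v\<in>vertices X. skeleton_connected (link X {v})"
    and gap: "\<forall>v\<in>vertices X. \<forall>\<mu>. laplacian_eigenvalue (link X {v}) (d - 1) (link_dist X d P {v}) \<mu>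
            \<and> \<mu> \<noteq> 0 \<longrightarrow> \<mu> \<ge> lam"
    and eigen: "\<forall>v\<in>vertices X. adjacency X d P f v = \<alpha> * f v"
    and nonzero: "\<exists>v\<in>vertices X. f v \<noteq> 0"
  shows "\<alpha> \<le> 1" and "\<alpha> \<le> lam * \<alpha>\<^sup>2 + (1 - lam)"
proof -
  define N where "N = face_sum X d P (\<lambda>u. (f u)\<^sup>2)"
  have "0 < real d" using \<open>2 \<le> d\<close> by simp
  have local: "star_sum X d P v (\<lambda>\<sigma>. sum f (\<sigma> - {v})) = real d * \<alpha> * f v * vertex_mass X d P v"
    if "v \<in> vertices X" for v
  proof -
    have "star_sum X d P v (\<lambda>\<sigma>. sum f (\<sigma> - {v})) / (real d * vertex_mass X d P v) = \<alpha> * f v"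
      using eigen that by (simp add: adjacency_eq_star_sum[OF pc])
    then show ?thesis
      using vertex_mass_pos[OF pc pd that] \<open>0 < real d\<close> by (simp add: divide_eq_eq mult_ac)
  qed
  have N_eq: "N = (\<Sum>v\<in>vertices X. (f v)\<^sup>2 * vertex_mass X d P v)"
    unfolding N_def by (rule sum_vertices_mult_vertex_mass[OF pc, symmetric])
  have "0 < N"
    unfolding N_def by (rule face_sum_square_pos[OF pc pd nonzero])
  have pair_eq: "face_pair_sum X d P f = real d * \<alpha> * N"
    unfolding sum_vertices_mult_star_sum_remove[OF pc, symmetric] N_eq sum_distrib_left
    by (intro sum.cong refl) (simp add: local power2_eq_square mult_ac)
  show "\<alpha> \<le> 1"
    using face_pair_sum_le[OF pc pd, of f] \<open>0 < N\<close> \<open>0 < real d\<close>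
    by (simp add: pair_eq flip: N_def)
  have "(\<Sum>v\<in>vertices X. (star_sum X d P v (\<lambda>\<sigma>. sum f (\<sigma> - {v})))\<^sup>2
      / ((real d)\<^sup>2 * vertex_mass X d P v)) = \<alpha>\<^sup>2 * N"
    unfolding N_eq sum_distrib_left
    using vertex_mass_pos[OF pc pd] \<open>0 < real d\<close>
    by (intro sum.cong refl) (auto simp: local field_simps power2_eq_square)
  then have "\<alpha> * N \<le> (lam * \<alpha>\<^sup>2 + (1 - lam)) * N"
    using face_pair_sum_le_link_bounds[OF pc \<open>2 \<le> d\<close> pd conn gap, of f] \<open>0 < real d\<close>
    by (simp add: pair_eq algebra_simps flip: N_def)
  then show "\<alpha> \<le> lam * \<alpha>\<^sup>2 + (1 - lam)"
    using \<open>0 < N\<close> by simp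
qed

text \<open>The distribution in the statement is called \<open>\<Pi>\<close>, which the product-set binder
  syntax of \<open>HOL-Library.FuncSet\<close> would otherwise capture.\<close>
no_syntax
  "_Pi" :: "pttrn \<Rightarrow> 'a set \<Rightarrow> 'b set \<Rightarrow> ('a \<Rightarrow> 'b) set"
    (\<open>(\<open>indent=3 notation=\<open>binder \<Pi>\<in>\<close>\<close>\<Pi> _\<in>_./ _)\<close> 10)

theorem mainTheorem2:
  fixes X :: "'a set set" and d :: nat and \<Pi> :: "'a set \<Rightarrow> real" and lam :: real
  assumes "pure_complex X d" and "d \<ge> 2" and "prob_dist X d \<Pi>"
    and "skeleton_connected X"
    and "\<forall>v\<in>vertices X. skeleton_connected (link X {v})"
    and "0 < lam" and "lam \<le> 1"
    and "\<forall>v\<in>vertices X. \<forall>\<mu>. laplacian_eigenvalue (link X {v}) (d - 1) (link_dist X d \<Pi> {v}) \<mu>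
            \<and> \<mu> \<noteq> 0 \<longrightarrow> \<mu> \<ge> lam"
  shows "\<forall>\<mu>. laplacian_eigenvalue X d \<Pi> \<mu> \<and> \<mu> \<noteq> 0 \<longrightarrow> \<mu> \<ge> 2 - 1 / lam"
proof (intro allI impI)
  fix \<mu> assume "laplacian_eigenvalue X d \<Pi> \<mu> \<and> \<mu> \<noteq> 0"
  then obtain f where nonzero: "\<exists>v\<in>vertices X. f v \<noteq> 0"
    and eigen: "\<forall>v\<in>vertices X. laplacian X d \<Pi> f v = \<mu> * f v" and "\<mu> \<noteq> 0"
    unfolding laplacian_eigenvalue_def by blast
  have "\<forall>v\<in>vertices X. adjacency X d \<Pi> f v = (1 - \<mu>) * f v"
    using eigen by (simp add: laplacian_def algebra_simps)
  note bounds = adjacency_eigenvalue_bounds[OF assms(1-3,5,8) this nonzero]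
  have "0 < \<mu>" using bounds(1) \<open>\<mu> \<noteq> 0\<close> by simp
  moreover have "\<mu> * (lam * (2 - \<mu>) - 1) \<le> 0"
    using bounds(2) by (simp add: algebra_simps power2_eq_square)
  ultimately have "lam * (2 - \<mu>) \<le> 1"
    by (simp add: mult_le_0_iff)
  then show "\<mu> \<ge> 2 - 1 / lam"
    using \<open>0 < lam\<close> by (simp add: field_simps)
qed

end
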